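(* Let $n,k$ be odd integers with $2<2k\le n$. Suppose the integer program $( * )$ has a solution but no trivial solution, and let $(\mathsf{u},\mathsf{v}_+,\mathsf{v}_-,r,t)$ be a solution of $( * )$. Then $$\chi_c(\mathrm{Pet}(n,k))\ \ge\ 2+\frac{4r}{4r^2+2r+1}.$$
   Context: For integers $n,k$ with $2<2k\le n$, the generalized Petersen graph $\mathrm{Pet}(n,k)$ has vertex set $\{u_0,\dots,u_{n-1}\}\cup\{v_0,\dots,v_{n-1}\}$ and edge set $\{u_iu_{i+1}\}\cup\{u_iv_i\}\cup\{v_iv_{i+k}\}$, indices modulo $n$. The integer program $( * )$ is: minimize $\mathsf{u}+\mathsf{v}_++\mathsf{v}_-$ over integers $\mathsf{u},\mathsf{v}_+,\mathsf{v}_-,r\ge 0$ and $t\in\mathbb{Z}$ subject to $\mathsf{u}+k(\mathsf{v}_+-\mathsf{v}_-)=tn$ and $\mathsf{u}+\mathsf{v}_++\mathsf{v}_-=2r+1$. A solution is a minimizer; it is trivial if $\mathsf{u}=0$ or $\mathsf{v}_++\mathsf{v}_-=0$. For integers $p\ge 2q\ge 2$, the circular complete graph $K_{p/q}$ has vertex set $\{0,\dots,p-1\}$ with $i\sim j$ iff $q\le|i-j|\le p-q$; the circular chromatic number $\chi_c(G)$ is the minimum of $p/q$ over all such $p,q$ for which $G$ admits a homomorphism to $K_{p/q}$. *)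

theory Defs
  imports Complex_Main
begin

text \<open>Generalized Petersen graph Pet(n,k). Vertex (False,i) is u_i, (True,i) is v_i, 0 <= i < n.\<close>

definition pet_verts :: "nat \<Rightarrow> (bool \<times> nat) set" where
  "pet_verts n = {(b, i). i < n}"

definition pet_edge :: "nat \<Rightarrow> nat \<Rightarrow> (bool \<times> nat) \<Rightarrow> (bool \<times> nat) \<Rightarrow> bool" where
  "pet_edge n k x y \<longleftrightarrow>
     (\<exists>i<n. (x = (False, i) \<and> y = (False, (i + 1) mod n))
           \<or> (x = (False, i) \<and> y = (True, i))
           \<or> (x = (True, i) \<and> y = (True, (i + k) mod n)))"

definition pet_adj :: "nat \<Rightarrow> nat \<Rightarrow> (bool \<times> nat) \<Rightarrow> (bool \<times> nat) \<Rightarrow> bool" where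
  "pet_adj n k x y \<longleftrightarrow> pet_edge n k x y \<or> pet_edge n k y x"

definition circ_adj :: "nat \<Rightarrow> nat \<Rightarrow> nat \<Rightarrow> nat \<Rightarrow> bool" where
  "circ_adj p q i j \<longleftrightarrow> q \<le> nat \<bar>int i - int j\<bar> \<and> nat \<bar>int i - int j\<bar> \<le> p - q"

definition circ_hom :: "'a set \<Rightarrow> ('a \<Rightarrow> 'a \<Rightarrow> bool) \<Rightarrow> nat \<Rightarrow> nat \<Rightarrow> ('a \<Rightarrow> nat) \<Rightarrow> bool" where
  "circ_hom V adj p q f \<longleftrightarrow>
     (\<forall>x\<in>V. f x < p) \<and> (\<forall>x\<in>V. \<forall>y\<in>V. adj x y \<longrightarrow> circ_adj p q (f x) (f y))"

definition circular_chromatic_number :: "'a set \<Rightarrow> ('a \<Rightarrow> 'a \<Rightarrow> bool) \<Rightarrow> real" where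
  "circular_chromatic_number V adj =
     Inf {real p / real q | p q. 2 * q \<le> p \<and> 1 \<le> q \<and> (\<exists>f. circ_hom V adj p q f)}"

definition ip_feasible :: "nat \<Rightarrow> nat \<Rightarrow> nat \<Rightarrow> nat \<Rightarrow> nat \<Rightarrow> nat \<Rightarrow> int \<Rightarrow> bool" where
  "ip_feasible n k u vp vm r t \<longleftrightarrow>
     int u + int k * (int vp - int vm) = t * int n \<and> u + vp + vm = 2 * r + 1"

definition ip_solution :: "nat \<Rightarrow> nat \<Rightarrow> nat \<Rightarrow> nat \<Rightarrow> nat \<Rightarrow> nat \<Rightarrow> int \<Rightarrow> bool" where
  "ip_solution n k u vp vm r t \<longleftrightarrow> ip_feasible n k u vp vm r t \<and>
     (\<forall>u' vp' vm' r' t'. ip_feasible n k u' vp' vm' r' t' \<longrightarrow> u + vp + vm \<le> u' + vp' + vm')"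

definition ip_trivial :: "nat \<Rightarrow> nat \<Rightarrow> nat \<Rightarrow> bool" where
  "ip_trivial u vp vm \<longleftrightarrow> u = 0 \<or> vp + vm = 0"

end

theory Submission
  imports Defs
begin

text \<open>
  A homomorphism f into K_{p/q} gives every oriented edge xy the integer 2((f y - f x) mod p) - p,
  its tension: it changes sign under reversal, has absolute value at most p - 2q, and around a
  closed walk of odd length the tensions sum to p times an odd integer.
  A feasible point of (*) yields for every i a closed walk of odd length 2r + 3 in Pet(n,k):
  u rim steps from u_i, a spoke, v+ inner steps by +k and v- by -k, which lead back to v_i since
  u + k(v+ - v-) = tn, and the spoke to u_i. The closing spoke of the walk at i + u reverses the
  first spoke of the walk at i, so the tension sums of these two walks add up to at most
  2(2r + 2)(p - 2q) in absolute value. If (4r + 4)q > (2r + 1)p this is less than 2p, so the two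
  odd multipliers are opposite; after n shifts by u (n odd) we are back at the walk at i with
  the opposite sign, a contradiction. Hence p/q >= (4r + 4)/(2r + 1) >= 2 + 4r/(4r^2 + 2r + 1).
\<close>

definition odd_quotient :: "int \<Rightarrow> int \<Rightarrow> int" where
  "odd_quotient p d = 2 * (d div p) + 1"

definition sym_residue :: "int \<Rightarrow> int \<Rightarrow> int" where
  "sym_residue p d = 2 * (d mod p) - p"

lemma sym_residue_eq: "sym_residue p d = 2 * d - p * odd_quotient p d"
  unfolding odd_quotient_def sym_residue_def minus_mult_div_eq_mod[symmetric]
  by (simp add: algebra_simps)

lemma odd_odd_quotient [simp]: "odd (odd_quotient p d)"
  by (simp add: odd_quotient_def)

lemma abs_sym_residue_le:
  fixes p q d :: int
  assumes "1 \<le> q" "q \<le> \<bar>d\<bar>" "\<bar>d\<bar> \<le> p - q"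
  shows "\<bar>sym_residue p d\<bar> \<le> p - 2 * q"
proof (cases "d > 0")
  case True
  then have "d mod p = d" using assms by (simp add: mod_pos_pos_trivial)
  then show ?thesis using True assms by (simp add: sym_residue_def)
next
  case False
  then have "d < 0" "0 \<le> d + p" "d + p < p" using assms by linarith+
  then have "d mod p = d + p"
    using mod_pos_pos_trivial[of "d + p" p] by simp
  then show ?thesis using \<open>d < 0\<close> assms by (simp add: sym_residue_def)
qed

lemma sym_residue_uminus:
  fixes p q d :: int
  assumes "1 \<le> q" "q \<le> \<bar>d\<bar>" "\<bar>d\<bar> \<le> p - q"
  shows "sym_residue p (- d) = - sym_residue p d"
proof -
  have "\<not> p dvd d"
  proof
    assume "p dvd d"
    moreover have "d \<noteq> 0" using assms by auto
    ultimately have "\<bar>p\<bar> \<le> \<bar>d\<bar>" by (simp add: dvd_imp_le_int)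
    then show False using assms by linarith
  qed
  then have "d mod p \<noteq> 0" by (simp add: mod_eq_0_iff_dvd)
  then show ?thesis by (simp add: sym_residue_def zmod_zminus1_eq_if)
qed

lemma closed_walk_sum_sym_residue:
  fixes g :: "nat \<Rightarrow> int"
  assumes "g L = g 0" "odd L"
  shows "\<exists>z. odd z \<and> (\<Sum>j<L. sym_residue p (g (Suc j) - g j)) = p * z"
proof (intro exI conjI)
  let ?z = "\<Sum>j<L. odd_quotient p (g (Suc j) - g j)"
  show "odd (- ?z)"
    using assms(2) by (simp add: even_sum_iff)
  have "(\<Sum>j<L. sym_residue p (g (Suc j) - g j))
      = 2 * (\<Sum>j<L. g (Suc j) - g j) - p * ?z"
    by (simp add: sym_residue_eq sum_subtractf sum_distrib_left)
  also have "(\<Sum>j<L. g (Suc j) - g j) = 0"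
    using assms(1) by (simp add: sum_lessThan_telescope)
  finally show "(\<Sum>j<L. sym_residue p (g (Suc j) - g j)) = p * - ?z" by simp
qed

definition walk_in :: "'a set \<Rightarrow> ('a \<Rightarrow> 'a \<Rightarrow> bool) \<Rightarrow> nat \<Rightarrow> (nat \<Rightarrow> 'a) \<Rightarrow> bool" where
  "walk_in V adj L w \<longleftrightarrow> (\<forall>j\<le>L. w j \<in> V) \<and> (\<forall>j<L. adj (w j) (w (Suc j)))"

definition tension :: "nat \<Rightarrow> ('a \<Rightarrow> nat) \<Rightarrow> 'a \<Rightarrow> 'a \<Rightarrow> int" where
  "tension p f x y = sym_residue (int p) (int (f y) - int (f x))"

lemma circ_hom_adj_diff:
  assumes "circ_hom V adj p q f" "q \<le> p" "x \<in> V" "y \<in> V" "adj x y"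
  shows "int q \<le> \<bar>int (f y) - int (f x)\<bar> \<and> \<bar>int (f y) - int (f x)\<bar> \<le> int p - int q"
proof -
  have "circ_adj p q (f x) (f y)" using assms unfolding circ_hom_def by blast
  then show ?thesis using assms(2) unfolding circ_adj_def by (auto simp: abs_minus_commute)
qed

lemma abs_tension_le:
  assumes "circ_hom V adj p q f" "1 \<le> q" "2 * q \<le> p" "x \<in> V" "y \<in> V" "adj x y"
  shows "\<bar>tension p f x y\<bar> \<le> int p - 2 * int q"
  using abs_sym_residue_le[of "int q"] circ_hom_adj_diff[of V adj p q f x y] assms
  unfolding tension_def by simp

lemma tension_swap:
  assumes "circ_hom V adj p q f" "1 \<le> q" "2 * q \<le> p" "x \<in> V" "y \<in> V" "adj x y"
  shows "tension p f y x = - tension p f x y"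
proof -
  have d: "int q \<le> \<bar>int (f y) - int (f x)\<bar>" "\<bar>int (f y) - int (f x)\<bar> \<le> int p - int q"
    using circ_hom_adj_diff[of V adj p q f x y] assms by auto
  have "sym_residue (int p) (- (int (f y) - int (f x))) = - sym_residue (int p) (int (f y) - int (f x))"
    by (rule sym_residue_uminus[OF _ d]) (use assms(2) in simp)
  then show ?thesis unfolding tension_def by simp
qed

lemma closed_walk_tension_sum:
  assumes "w L = w 0" "odd L"
  shows "\<exists>z. odd z \<and> (\<Sum>j<L. tension p f (w j) (w (Suc j))) = int p * z"
  using closed_walk_sum_sym_residue[of "\<lambda>j. int (f (w j))" L "int p"] assms
  unfolding tension_def by simp

lemma abs_tension_sum_le:
  assumes "circ_hom V adj p q f" "1 \<le> q" "2 * q \<le> p" "walk_in V adj L w" "A \<subseteq> {..<L}"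
  shows "\<bar>\<Sum>j\<in>A. tension p f (w j) (w (Suc j))\<bar> \<le> int (card A) * (int p - 2 * int q)"
proof -
  have "\<bar>tension p f (w j) (w (Suc j))\<bar> \<le> int p - 2 * int q" if "j \<in> A" for j
    using that assms abs_tension_le[OF assms(1-3)] unfolding walk_in_def by auto
  then show ?thesis
    by (rule order_trans[OF sum_abs sum_bounded_above])
qed

lemma abs_tension_sum_linked_walks_le:
  assumes hom: "circ_hom V adj p q f" and q: "1 \<le> q" "2 * q \<le> p"
    and walks: "walk_in V adj L w" "walk_in V adj L w'" and "e < L - 1"
    and reverse: "w' (L - 1) = w (Suc e)" "w' L = w e"
  shows "\<bar>(\<Sum>j<L. tension p f (w' j) (w' (Suc j))) + (\<Sum>j<L. tension p f (w j) (w (Suc j)))\<bar>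
    \<le> 2 * ((int L - 1) * (int p - 2 * int q))"
proof -
  define \<sigma> where "\<sigma> j = tension p f (w j) (w (Suc j))" for j
  define \<sigma>' where "\<sigma>' j = tension p f (w' j) (w' (Suc j))" for j
  have L: "Suc (L - 1) = L" using \<open>e < L - 1\<close> by simp
  have "w e \<in> V" "w (Suc e) \<in> V" "adj (w e) (w (Suc e))"
    using walks(1) \<open>e < L - 1\<close> unfolding walk_in_def by auto
  then have "\<sigma>' (L - 1) = - \<sigma> e"
    using reverse L tension_swap[OF hom q] unfolding \<sigma>_def \<sigma>'_def by simp
  moreover have "(\<Sum>j<L. \<sigma>' j) = (\<Sum>j<L - 1. \<sigma>' j) + \<sigma>' (L - 1)"
    using sum.lessThan_Suc[of \<sigma>' "L - 1"] L by simp
  moreover have "(\<Sum>j<L. \<sigma> j) = \<sigma> e + (\<Sum>j\<in>{..<L} - {e}. \<sigma> j)"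
    using sum.remove[of "{..<L}" e \<sigma>] \<open>e < L - 1\<close> by simp
  ultimately have "(\<Sum>j<L. \<sigma>' j) + (\<Sum>j<L. \<sigma> j) = (\<Sum>j<L - 1. \<sigma>' j) + (\<Sum>j\<in>{..<L} - {e}. \<sigma> j)"
    by simp
  moreover have "\<bar>\<Sum>j<L - 1. \<sigma>' j\<bar> \<le> (int L - 1) * (int p - 2 * int q)"
    using abs_tension_sum_le[OF hom q walks(2), of "{..<L - 1}"] L unfolding \<sigma>'_def
    by (simp add: of_nat_diff)
  moreover have "\<bar>\<Sum>j\<in>{..<L} - {e}. \<sigma> j\<bar> \<le> (int L - 1) * (int p - 2 * int q)"
    using abs_tension_sum_le[OF hom q walks(1), of "{..<L} - {e}"] \<open>e < L - 1\<close> unfolding \<sigma>_def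
    by (simp add: of_nat_diff)
  ultimately show ?thesis unfolding \<sigma>_def \<sigma>'_def by linarith
qed

lemma circ_hom_walk_chain_bound:
  fixes W :: "nat \<Rightarrow> nat \<Rightarrow> 'a"
  assumes hom: "circ_hom V adj p q f" and q: "1 \<le> q" "2 * q \<le> p"
    and walks: "\<And>m. walk_in V adj L (W m)" and closed: "\<And>m. W m L = W m 0"
    and "odd L" and "e < L - 1"
    and reverse: "\<And>m. W (Suc m) (L - 1) = W m (Suc e)" "\<And>m. W (Suc m) L = W m e"
    and period: "W N = W 0" and "odd N"
  shows "p \<le> (L - 1) * (p - 2 * q)"
proof (rule ccontr)
  define T where "T m = (\<Sum>j<L. tension p f (W m j) (W m (Suc j)))" for m
  have "\<exists>z. odd z \<and> T m = int p * z" for m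
    using closed_walk_tension_sum[OF closed[of m] \<open>odd L\<close>] unfolding T_def .
  then obtain z where z: "\<And>m. odd (z m)" "\<And>m. T m = int p * z m" by metis
  assume "\<not> ?thesis"
  then have "int ((L - 1) * (p - 2 * q)) < int p" by (simp only: not_le of_nat_less_iff)
  then have small: "(int L - 1) * (int p - 2 * int q) < int p"
    using \<open>e < L - 1\<close> q by (simp add: of_nat_diff)
  have flip: "z (Suc m) = - z m" for m
  proof -
    have "\<bar>int p * (z (Suc m) + z m)\<bar> \<le> 2 * ((int L - 1) * (int p - 2 * int q))"
      using abs_tension_sum_linked_walks_le[OF hom q walks[of m] walks[of "Suc m"] \<open>e < L - 1\<close>
          reverse(1)[of m] reverse(2)[of m]] z(2)[of m] z(2)[of "Suc m"]
      unfolding T_def by (simp add: distrib_left)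
    then have "int p * \<bar>z (Suc m) + z m\<bar> < int p * 2" using small by (simp add: abs_mult)
    then have "\<bar>z (Suc m) + z m\<bar> < 2" by (rule mult_left_less_imp_less) simp
    moreover have "even (z (Suc m) + z m)" using z(1) by simp
    ultimately show ?thesis by presburger
  qed
  have alternate: "z m = (- 1) ^ m * z 0" for m
    by (induction m) (simp_all add: flip)
  have "z N = z 0" using z(2)[of N] z(2)[of 0] period q unfolding T_def by simp
  then have "z 0 = - z 0" using alternate[of N] \<open>odd N\<close> by simp
  then show False using z(1)[of 0] by simp
qed

lemma circ_hom_injective:
  assumes "inj_on f V" "\<And>x. x \<in> V \<Longrightarrow> f x < p"
    and "\<And>x y. x \<in> V \<Longrightarrow> y \<in> V \<Longrightarrow> adj x y \<Longrightarrow> x \<noteq> y"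
  shows "circ_hom V adj p 1 f"
  unfolding circ_hom_def
proof (intro conjI ballI impI)
  fix x y assume "x \<in> V" "y \<in> V" "adj x y"
  then have "f x \<noteq> f y" "f x < p" "f y < p"
    using assms by (auto dest: inj_onD)
  then show "circ_adj p 1 (f x) (f y)" unfolding circ_adj_def by auto
qed (use assms in auto)

lemma circular_chromatic_number_ge:
  assumes "\<exists>p q f. 2 * q \<le> p \<and> 1 \<le> q \<and> circ_hom V adj p q f"
    and "\<And>p q f. 2 * q \<le> p \<Longrightarrow> 1 \<le> q \<Longrightarrow> circ_hom V adj p q f \<Longrightarrow> c \<le> real p / real q"
  shows "c \<le> circular_chromatic_number V adj"
  unfolding circular_chromatic_number_def by (rule cInf_greatest) (use assms in auto)

definition pet_rim :: "nat \<Rightarrow> int \<Rightarrow> bool \<times> nat" where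
  "pet_rim n a = (False, nat (a mod int n))"

definition pet_inner :: "nat \<Rightarrow> int \<Rightarrow> bool \<times> nat" where
  "pet_inner n a = (True, nat (a mod int n))"

lemma pet_rim_in_verts: "0 < n \<Longrightarrow> pet_rim n a \<in> pet_verts n"
  unfolding pet_rim_def pet_verts_def by (simp add: nat_less_iff)

lemma pet_inner_in_verts: "0 < n \<Longrightarrow> pet_inner n a \<in> pet_verts n"
  unfolding pet_inner_def pet_verts_def by (simp add: nat_less_iff)

lemma pet_rim_add_mult [simp]: "pet_rim n (a + int n * c) = pet_rim n a"
  by (simp add: pet_rim_def)

lemma pet_inner_add_mult [simp]: "pet_inner n (a + int n * c) = pet_inner n a"
  by (simp add: pet_inner_def)

lemma pet_adj_sym: "pet_adj n k x y \<longleftrightarrow> pet_adj n k y x"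
  unfolding pet_adj_def by blast

lemma nat_mod_add_eq:
  assumes "0 < n"
  shows "(nat (a mod int n) + m) mod n = nat ((a + int m) mod int n)"
proof -
  have "int ((nat (a mod int n) + m) mod n) = (a mod int n + int m) mod int n"
    using assms by (simp add: of_nat_mod)
  also have "\<dots> = (a + int m) mod int n" by (simp add: mod_add_left_eq)
  finally show ?thesis by (metis nat_int)
qed

lemma pet_adj_rim_succ: "0 < n \<Longrightarrow> pet_adj n k (pet_rim n a) (pet_rim n (a + 1))"
  using nat_mod_add_eq[of n a 1] unfolding pet_adj_def pet_edge_def pet_rim_def
  by (auto simp: nat_less_iff)

lemma pet_adj_spoke: "0 < n \<Longrightarrow> pet_adj n k (pet_rim n a) (pet_inner n a)"
  unfolding pet_adj_def pet_edge_def pet_rim_def pet_inner_def by (auto simp: nat_less_iff)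

lemma pet_adj_inner_step: "0 < n \<Longrightarrow> pet_adj n k (pet_inner n a) (pet_inner n (a + int k))"
  using nat_mod_add_eq[of n a k] unfolding pet_adj_def pet_edge_def pet_inner_def
  by (auto simp: nat_less_iff)

text \<open>
  Vertex j, for 0 <= j <= u + v+ + v- + 2, of the closed walk at u_i described above; after m
  inner steps the walk is at v_{i + u + k(min m v+ - (m - v+))}.
\<close>

definition ip_walk :: "nat \<Rightarrow> nat \<Rightarrow> nat \<Rightarrow> nat \<Rightarrow> nat \<Rightarrow> int \<Rightarrow> nat \<Rightarrow> bool \<times> nat" where
  "ip_walk n k u vp vm i j =
     (if j \<le> u then pet_rim n (int j + i)
      else if j \<le> u + vp + vm + 1
      then pet_inner n (int u + int k * (int (min (j - u - 1) vp) - int (j - u - 1 - vp)) + i)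
      else pet_rim n i)"

lemma ip_walk_inner:
  "m \<le> vp + vm \<Longrightarrow> ip_walk n k u vp vm i (Suc (u + m))
     = pet_inner n (int u + int k * (int (min m vp) - int (m - vp)) + i)"
  unfolding ip_walk_def by simp

lemma ip_walk_last:
  assumes "int u + int k * (int vp - int vm) = t * int n"
  shows "ip_walk n k u vp vm i (u + vp + vm + 1) = pet_inner n i"
proof -
  have "ip_walk n k u vp vm i (u + vp + vm + 1) = pet_inner n (int u + int k * (int vp - int vm) + i)"
    using ip_walk_inner[of "vp + vm" vp vm n k u i] by (simp add: add.assoc)
  also have "int u + int k * (int vp - int vm) + i = i + int n * t"
    using assms by (simp add: algebra_simps)
  finally show ?thesis by simp
qed

lemma ip_walk_periodic: "ip_walk n k u vp vm (i + int n * c) = ip_walk n k u vp vm i"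
proof -
  have shift: "x + (i + int n * c) = (x + i) + int n * c" for x by (simp add: algebra_simps)
  show ?thesis unfolding ip_walk_def by (simp only: shift pet_rim_add_mult pet_inner_add_mult)
qed

lemma ip_walk_inner_adj:
  assumes "0 < n" "m < vp + vm"
  shows "pet_adj n k (ip_walk n k u vp vm i (Suc (u + m))) (ip_walk n k u vp vm i (Suc (Suc (u + m))))"
proof -
  define a where "a = int u + int k * (int (min m vp) - int (m - vp)) + i"
  have walk_m: "ip_walk n k u vp vm i (Suc (u + m)) = pet_inner n a"
    using assms(2) ip_walk_inner[of m vp vm] unfolding a_def by simp
  have walk_Suc_m: "ip_walk n k u vp vm i (Suc (Suc (u + m)))
      = pet_inner n (int u + int k * (int (min (Suc m) vp) - int (Suc m - vp)) + i)"
    using assms(2) ip_walk_inner[of "Suc m" vp vm n k u i] by simp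
  show ?thesis
  proof (cases "m < vp")
    case True
    then have "ip_walk n k u vp vm i (Suc (Suc (u + m))) = pet_inner n (a + int k)"
      unfolding walk_Suc_m a_def by (simp add: algebra_simps)
    then show ?thesis using walk_m pet_adj_inner_step[OF assms(1)] by simp
  next
    case False
    then have "ip_walk n k u vp vm i (Suc (Suc (u + m))) = pet_inner n (a - int k)"
      unfolding walk_Suc_m a_def by (simp add: Suc_diff_le algebra_simps)
    then show ?thesis
      using walk_m pet_adj_inner_step[OF assms(1), of k "a - int k"] pet_adj_sym by simp
  qed
qed

lemma ip_walk_adj:
  assumes "0 < n" "int u + int k * (int vp - int vm) = t * int n" "j < u + vp + vm + 2"
  shows "pet_adj n k (ip_walk n k u vp vm i j) (ip_walk n k u vp vm i (Suc j))"
proof -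
  consider (rim) "j < u" | (spoke) "j = u" | (inner) m where "j = Suc (u + m)" "m < vp + vm"
    | (return) "j = u + vp + vm + 1"
  proof (cases "u < j \<and> j < u + vp + vm + 1")
    case True
    then have "j = Suc (u + (j - u - 1))" "j - u - 1 < vp + vm" by auto
    then show thesis using that(3) by blast
  next
    case False
    then show thesis using that(1,2,4) assms(3) by linarith
  qed
  then show ?thesis
  proof cases
    case rim
    have "ip_walk n k u vp vm i (Suc j) = pet_rim n (int j + i + 1)"
      using rim by (simp add: ip_walk_def algebra_simps)
    then show ?thesis using rim pet_adj_rim_succ[OF assms(1)] by (simp add: ip_walk_def)
  next
    case spoke
    then show ?thesis using pet_adj_spoke[OF assms(1)] by (simp add: ip_walk_def)
  next
    case inner
    then show ?thesis using ip_walk_inner_adj[OF assms(1)] by simp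
  next
    case return
    then show ?thesis
      using ip_walk_last[OF assms(2)] pet_adj_spoke[OF assms(1)] pet_adj_sym
      by (simp add: ip_walk_def)
  qed
qed

lemma pet_adj_irrefl:
  assumes "1 < n" "0 < k" "k < n"
  shows "\<not> pet_adj n k x x"
  using assms unfolding pet_adj_def pet_edge_def by (auto simp: mod_if)

lemma pet_circ_hom_double:
  assumes "1 < n" "0 < k" "k < n"
  shows "circ_hom (pet_verts n) (pet_adj n k) (2 * n) 1 (\<lambda>(b, i). 2 * i + of_bool b)"
proof (rule circ_hom_injective)
  show "inj_on (\<lambda>(b, i). 2 * i + of_bool b) (pet_verts n)"
    by (auto simp: inj_on_def of_bool_def split: if_splits; presburger)
  show "x \<noteq> y" if "pet_adj n k x y" for x y
    using that pet_adj_irrefl[OF assms, of x] by auto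
qed (auto simp: pet_verts_def)

lemma pet_circ_hom_bound:
  assumes "odd n" "ip_feasible n k u vp vm r t"
    and hom: "circ_hom (pet_verts n) (pet_adj n k) p q f" and q: "1 \<le> q" "2 * q \<le> p"
  shows "(4 * r + 4) * q \<le> (2 * r + 1) * p"
proof -
  have n: "0 < n" using assms(1) by (simp add: odd_pos)
  have eq: "int u + int k * (int vp - int vm) = t * int n" and len: "u + vp + vm = 2 * r + 1"
    using assms(2) unfolding ip_feasible_def by auto
  define L where "L = u + vp + vm + 2"
  define W where "W m = ip_walk n k u vp vm (int (m * u))" for m
  have "p \<le> (L - 1) * (p - 2 * q)"
  proof (rule circ_hom_walk_chain_bound[OF hom q, where W = W and L = L and e = u and N = n])
    show "walk_in (pet_verts n) (pet_adj n k) L (W m)" for m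
      unfolding walk_in_def
    proof (intro conjI allI impI)
      show "W m j \<in> pet_verts n" for j
        unfolding W_def ip_walk_def using pet_rim_in_verts[OF n] pet_inner_in_verts[OF n] by simp
      show "pet_adj n k (W m j) (W m (Suc j))" if "j < L" for j
        using ip_walk_adj[OF n eq] that unfolding W_def L_def by simp
    qed
    show "W m L = W m 0" for m
      unfolding W_def ip_walk_def L_def by simp
    show "W (Suc m) (L - 1) = W m (Suc u)" for m
      using ip_walk_last[OF eq] ip_walk_inner[of 0 vp vm n k u] unfolding W_def L_def
      by (simp add: add.commute)
    show "W (Suc m) L = W m u" for m
      unfolding W_def ip_walk_def L_def by (simp add: add.commute)
    show "W n = W 0"
      using ip_walk_periodic[of n k u vp vm 0 "int u"] unfolding W_def by (simp add: mult.commute)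
    show "odd L" "u < L - 1" "odd n" using len assms(1) unfolding L_def by simp_all
  qed
  moreover have "L - 1 = 2 * r + 2" using len unfolding L_def by simp
  ultimately have "int p \<le> int ((2 * r + 2) * (p - 2 * q))"
    by (simp only: of_nat_le_iff)
  also have "\<dots> = (2 * int r + 2) * (int p - 2 * int q)"
    by (simp only: of_nat_mult of_nat_diff[OF q(2)]) simp
  finally have "(4 * int r + 4) * int q \<le> (2 * int r + 1) * int p"
    by (simp add: algebra_simps)
  then show ?thesis
    by (metis (mono_tags) of_nat_le_iff of_nat_mult of_nat_add of_nat_1 of_nat_numeral)
qed

lemma ratio_ge_of_linear_bound:
  fixes r p q :: nat
  assumes "(4 * r + 4) * q \<le> (2 * r + 1) * p" "1 \<le> q"
  shows "2 + 4 * real r / (4 * real r ^ 2 + 2 * real r + 1) \<le> real p / real q"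
proof -
  have "0 < 4 * real r ^ 2 + 2 * real r + 1" by (simp add: add_nonneg_pos)
  then have "2 + 4 * real r / (4 * real r ^ 2 + 2 * real r + 1) \<le> (4 * real r + 4) / (2 * real r + 1)"
    by (simp add: field_simps power2_eq_square)
  also have "\<dots> \<le> real p / real q"
  proof -
    have "(4 * real r + 4) * real q \<le> (2 * real r + 1) * real p"
      using assms(1) by (metis (mono_tags) of_nat_le_iff of_nat_mult of_nat_add of_nat_1 of_nat_numeral)
    then show ?thesis using assms(2) by (simp add: field_simps)
  qed
  finally show ?thesis .
qed

theorem corollary4:
  fixes n k u vp vm r :: nat and t :: int
  assumes "odd n" and "odd k" and "2 < 2 * k" and "2 * k \<le> n"
    and "\<exists>u' vp' vm' r' t'. ip_solution n k u' vp' vm' r' t'"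
    and "\<forall>u' vp' vm' r' t'. ip_solution n k u' vp' vm' r' t' \<longrightarrow> \<not> ip_trivial u' vp' vm'"
    and "ip_solution n k u vp vm r t"
  shows "circular_chromatic_number (pet_verts n) (pet_adj n k)
           \<ge> 2 + 4 * real r / (4 * real r ^ 2 + 2 * real r + 1)"
proof (rule circular_chromatic_number_ge)
  show "\<exists>p q g. 2 * q \<le> p \<and> 1 \<le> q \<and> circ_hom (pet_verts n) (pet_adj n k) p q g"
    using pet_circ_hom_double[of n k] assms(3,4) by (intro exI[of _ "2 * n"] exI[of _ 1]) auto
  have "ip_feasible n k u vp vm r t" using assms(7) unfolding ip_solution_def by simp
  then show "2 + 4 * real r / (4 * real r ^ 2 + 2 * real r + 1) \<le> real p / real q"
    if "2 * q \<le> p" "1 \<le> q" "circ_hom (pet_verts n) (pet_adj n k) p q f" for p q f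
    using pet_circ_hom_bound[OF assms(1) _ that(3,2,1)] ratio_ge_of_linear_bound that(2) by blast
qed

end
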